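(* Let $N$ be a positive even integer, $\alpha,\beta$ real with $(1-\alpha/2)_k\neq0$ for $k\le N/2$, and put $\eta=\tfrac12-\tfrac{\alpha+\beta}{4}$, $\tau=2N+2-\alpha-\beta$. Let $P_n$ be the monic dual $-1$ Hahn polynomials defined in the context. Then, as polynomial identities in $x$: for $0\le n\le N/2$, $$P_{2n}(x-1)=16^n(-N/2)_n(1-\alpha/2)_n\;{}_3F_2\!\left(\begin{matrix}-n,\ \eta+\tfrac x4,\ \eta-\tfrac x4\\ -\tfrac N2,\ 1-\tfrac\alpha2\end{matrix};1\right),$$ and for $0\le n\le N/2-1$, $$P_{2n+1}(x-1)=16^n(1-N/2)_n(1-\alpha/2)_n\,(x-\tau)\;{}_3F_2\!\left(\begin{matrix}-n,\ \eta+\tfrac x4,\ \eta-\tfrac x4\\ 1-\tfrac N2,\ 1-\tfrac\alpha2\end{matrix};1\right).$$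
   Context: $(c)_k=c(c+1)\cdots(c+k-1)$, $(c)_0=1$, and ${}_3F_2\!\left(\begin{matrix}-n,a_2,a_3\\ b_1,b_2\end{matrix};1\right)=\sum_{k=0}^n\frac{(-n)_k(a_2)_k(a_3)_k}{(b_1)_k(b_2)_k\,k!}$. For $N$ even and $\sigma=\alpha+\beta$: $b_n^{(-1)}=2N+1-\sigma$ for $n$ even, $b_n^{(-1)}=-2N-3+\sigma$ for $n$ odd; $u_n^{(-1)}=4n(\alpha-n)$ for $n$ even, $u_n^{(-1)}=4(N-n+1)(n+\beta-N-1)$ for $n$ odd. The monic dual $-1$ Hahn polynomials are defined by $P_{-1}=0$, $P_0=1$, $P_{n+1}(x)=(x-b_n^{(-1)})P_n(x)-u_n^{(-1)}P_{n-1}(x)$ for $n\ge0$. *)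

theory Defs
  imports "HOL-Analysis.Analysis" "HOL-Computational_Algebra.Polynomial"
begin

definition dh_b :: "nat \<Rightarrow> real \<Rightarrow> real \<Rightarrow> nat \<Rightarrow> real" where
  "dh_b N \<alpha> \<beta> n = (if even n then 2 * real N + 1 - (\<alpha> + \<beta>)
                      else - 2 * real N - 3 + (\<alpha> + \<beta>))"

definition dh_u :: "nat \<Rightarrow> real \<Rightarrow> real \<Rightarrow> nat \<Rightarrow> real" where
  "dh_u N \<alpha> \<beta> n = (if even n then 4 * real n * (\<alpha> - real n)
                      else 4 * (real N - real n + 1) * (real n + \<beta> - real N - 1))"

text \<open>Pair (P_n, P_{n+1}) of monic dual -1 Hahn polynomials, with P_{-1} = 0, P_0 = 1.\<close>
fun dh_pair :: "nat \<Rightarrow> real \<Rightarrow> real \<Rightarrow> nat \<Rightarrow> real poly \<times> real poly" where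
  "dh_pair N \<alpha> \<beta> 0 = (1, [:- dh_b N \<alpha> \<beta> 0, 1:])"
| "dh_pair N \<alpha> \<beta> (Suc n) =
     (let (p, q) = dh_pair N \<alpha> \<beta> n
      in (q, [:- dh_b N \<alpha> \<beta> (Suc n), 1:] * q - smult (dh_u N \<alpha> \<beta> (Suc n)) p))"

definition dual_hahn :: "nat \<Rightarrow> real \<Rightarrow> real \<Rightarrow> nat \<Rightarrow> real poly" where
  "dual_hahn N \<alpha> \<beta> n = fst (dh_pair N \<alpha> \<beta> n)"

definition hyp3F2 :: "nat \<Rightarrow> real \<Rightarrow> real \<Rightarrow> real \<Rightarrow> real \<Rightarrow> real" where
  "hyp3F2 n a2 a3 b1 b2 = (\<Sum>k=0..n. pochhammer (- real n) k * pochhammer a2 k * pochhammer a3 k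
        / (pochhammer b1 k * pochhammer b2 k * fact k))"

end

theory Submission
  imports Defs
begin

(* Write a = -N/2, c = 1 - alpha/2, e = 1/2 - (alpha+beta)/4,
   q_k(x) = (e + x/4)_k (e - x/4)_k, and clear the denominators of the 3F2:
     C(a,c,e;x;n) = sum_{k<=n} 16^n (-1)^k binom(n,k) (a+k)_{n-k} (c+k)_{n-k} q_k(x).
   When (a)_n and (c)_n do not vanish, C(a,c,e;x;n) = 16^n (a)_n (c)_n 3F2(...),
   so the theorem says P_{2n}(x-1) = C(a,c,e;x;n) and
   P_{2n+1}(x-1) = (x - tau) C(a+1,c,e;x;n).  Since tau = 4(e-a), both follow by
   induction on n from the two three-term relations between these sums:
     C(a+1;n+1) = C(a;n+1) + 16(n+1)(c+n) C(a+1;n)                    (contiguity)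
     C(a;n+1)   = (x^2 - 16(e-a)^2) C(a+1;n) + 16(a+n)(a+c+n-2e) C(a;n),
   which are exactly the recurrence of P at the odd and even steps.  Both are
   proved coefficientwise in the basis q_k, using x^2 q_k = 16(e+k)^2 q_k - 16 q_{k+1}. *)

section \<open>Signed binomial coefficients\<close>

text \<open>The signed binomial (-1)^k binom(n,k) equals (-n)_k / k!, the coefficient
  pattern of a terminating hypergeometric series.\<close>
definition sbinom :: "nat \<Rightarrow> nat \<Rightarrow> real" where
  "sbinom n k = (-1)^k * real (n choose k)"

lemma sbinom_eq_0: "n < k \<Longrightarrow> sbinom n k = 0"
  by (simp add: sbinom_def)

lemma sbinom_pochhammer: "sbinom n k = pochhammer (- real n) k / fact k"
proof -
  have "real (n choose k) = (-1)^k * pochhammer (- real n) k / fact k"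
    using binomial_gbinomial[of n k, where 'a=real] gbinomial_pochhammer[of "real n" k] by simp
  moreover have "(-1::real)^k * (-1)^k = 1" by (simp flip: power_add)
  ultimately show ?thesis
    by (simp add: sbinom_def mult.assoc[symmetric])
qed

lemma sbinom_pascal: "sbinom (Suc n) (Suc k) = sbinom n (Suc k) - sbinom n k"
  by (simp add: sbinom_def algebra_simps)

lemma sbinom_absorb_upper: "(real n + 1 - real k) * sbinom (Suc n) k = (real n + 1) * sbinom n k"
proof (cases "k \<le> Suc n")
  case True
  have "(Suc n - k) * (Suc n choose k) = Suc n * (n choose k)"
    using binomial_absorb_comp[of "Suc n" k] by simp
  then have "real (Suc n - k) * real (Suc n choose k) = real (Suc n) * real (n choose k)"
    by (metis of_nat_mult)
  then have binom: "(real n + 1 - real k) * real (Suc n choose k) = (real n + 1) * real (n choose k)"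
    using True by (simp add: of_nat_diff add.commute)
  have "(real n + 1 - real k) * sbinom (Suc n) k
      = (-1)^k * ((real n + 1 - real k) * real (Suc n choose k))"
    by (simp add: sbinom_def)
  also have "\<dots> = (real n + 1) * sbinom n k"
    unfolding binom by (simp add: sbinom_def)
  finally show ?thesis .
next
  case False
  then show ?thesis by (simp add: sbinom_eq_0)
qed

lemma sbinom_absorb_lower: "(real k + 1) * sbinom n (Suc k) = - (real n - real k) * sbinom n k"
proof (cases "k \<le> n")
  case True
  have "Suc k * (n choose Suc k) = (n - k) * (n choose k)"
    by (metis binomial_absorb_comp binomial_absorption diff_Suc_Suc)
  then have "real (Suc k) * real (n choose Suc k) = real (n - k) * real (n choose k)"
    by (metis of_nat_mult)
  then have binom: "(real k + 1) * real (n choose Suc k) = (real n - real k) * real (n choose k)"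
    using True by (simp add: of_nat_diff add.commute)
  have "(real k + 1) * sbinom n (Suc k) = - ((-1)^k * ((real k + 1) * real (n choose Suc k)))"
    by (simp add: sbinom_def)
  also have "\<dots> = - (real n - real k) * sbinom n k"
    unfolding binom by (simp add: sbinom_def algebra_simps)
  finally show ?thesis .
next
  case False
  then show ?thesis by (simp add: sbinom_eq_0)
qed

text \<open>Pascal's rule and the lower ratio, phrased with the predecessor term
  (taken to be 0 at k = 0), as they enter the three-term relation.\<close>
lemma sbinom_pred:
  assumes "k \<le> n"
  defines "Sm \<equiv> if k = 0 then 0 else sbinom n (k - 1)"
  shows "sbinom (Suc n) k = sbinom n k - Sm"
    and "real k * sbinom n k = - (real n - real k + 1) * Sm"
proof -
  show "sbinom (Suc n) k = sbinom n k - Sm"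
  proof (cases k)
    case 0
    then show ?thesis by (simp add: Sm_def sbinom_def)
  next
    case (Suc j)
    then show ?thesis by (simp add: Sm_def sbinom_pascal)
  qed
  show "real k * sbinom n k = - (real n - real k + 1) * Sm"
    using assms(1) sbinom_absorb_lower[of "k - 1" n]
    by (cases k) (simp_all add: Sm_def of_nat_diff algebra_simps)
qed

section \<open>Coefficients of the cleared hypergeometric sum\<close>

text \<open>Coefficient of q_k in 16^n (a)_n (c)_n 3F2(-n, e+x/4, e-x/4; a, c; 1).\<close>
definition hcoef :: "real \<Rightarrow> real \<Rightarrow> nat \<Rightarrow> nat \<Rightarrow> real" where
  "hcoef a c n k = 16^n * sbinom n k * pochhammer (a + real k) (n - k) * pochhammer (c + real k) (n - k)"

lemma hcoef_eq_0: "n < k \<Longrightarrow> hcoef a c n k = 0"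
  by (simp add: hcoef_def sbinom_eq_0)

lemma pochhammer_diff_base:
  "pochhammer (x + 1) (Suc m) - pochhammer x (Suc m) = (real m + 1) * pochhammer (x + 1) m"
proof -
  have "pochhammer (x + 1) (Suc m) = pochhammer (x + 1) m * (x + 1 + real m)"
    by (simp add: pochhammer_Suc)
  moreover have "pochhammer x (Suc m) = x * pochhammer (x + 1) m"
    by (simp add: pochhammer_rec)
  ultimately show ?thesis by (simp add: algebra_simps)
qed

lemma hcoef_shift: "(a + real k) * hcoef (a + 1) c n k = (a + real n) * hcoef a c n k"
proof (cases "k \<le> n")
  case True
  have "(a + real k) * pochhammer (a + 1 + real k) (n - k) = pochhammer (a + real k) (Suc (n - k))"
    by (simp add: pochhammer_rec algebra_simps)
  also have "\<dots> = pochhammer (a + real k) (n - k) * (a + real n)"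
    using True by (simp add: pochhammer_Suc of_nat_diff)
  finally have shift: "(a + real k) * pochhammer (a + 1 + real k) (n - k)
      = pochhammer (a + real k) (n - k) * (a + real n)" .
  have "(a + real k) * hcoef (a + 1) c n k
      = 16^n * sbinom n k * ((a + real k) * pochhammer (a + 1 + real k) (n - k))
        * pochhammer (c + real k) (n - k)"
    by (simp add: hcoef_def ac_simps)
  then show ?thesis
    unfolding shift by (simp add: hcoef_def ac_simps)
next
  case False
  then show ?thesis by (simp add: hcoef_eq_0)
qed

lemma hcoef_contiguous:
  "hcoef (a + 1) c (Suc n) k
     = hcoef a c (Suc n) k + 16 * (real n + 1) * (c + real n) * hcoef (a + 1) c n k"
proof (cases "k \<le> n")
  case True
  then have m: "Suc n - k = Suc (n - k)" by simp
  have pc: "pochhammer (c + real k) (Suc (n - k)) = pochhammer (c + real k) (n - k) * (c + real n)"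
    using True by (simp add: pochhammer_Suc of_nat_diff)
  have sb: "(real (n - k) + 1) * sbinom (Suc n) k = (real n + 1) * sbinom n k"
    using sbinom_absorb_upper[of n k] True by (simp add: of_nat_diff algebra_simps)
  have "hcoef (a + 1) c (Suc n) k - hcoef a c (Suc n) k
      = 16^Suc n * sbinom (Suc n) k * pochhammer (c + real k) (Suc (n - k))
        * (pochhammer (a + real k + 1) (Suc (n - k)) - pochhammer (a + real k) (Suc (n - k)))"
    unfolding hcoef_def m by (simp add: algebra_simps)
  also have "\<dots> = 16 * (c + real n) * ((real (n - k) + 1) * sbinom (Suc n) k)
        * (16^n * pochhammer (a + 1 + real k) (n - k) * pochhammer (c + real k) (n - k))"
    unfolding pochhammer_diff_base pc by (simp add: algebra_simps)
  also have "\<dots> = 16 * (real n + 1) * (c + real n) * hcoef (a + 1) c n k"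
    unfolding sb hcoef_def by (simp add: algebra_simps)
  finally show ?thesis by simp
next
  case False
  then consider "k = Suc n" | "Suc n < k" by linarith
  then show ?thesis
    by cases (simp_all add: hcoef_def sbinom_eq_0)
qed

text \<open>The coefficient at index k - 1 (0 at k = 0), written with Pochhammer
  symbols based at index k so that it can be compared with the one at k.\<close>
lemma hcoef_pred:
  assumes "k \<le> n"
  shows "(if k = 0 then 0 else hcoef (a + 1) c n (k - 1))
     = 16^n * (if k = 0 then 0 else sbinom n (k - 1))
       * pochhammer (a + real k) (Suc (n - k)) * pochhammer (c + real k - 1) (Suc (n - k))"
proof (cases k)
  case (Suc k')
  then have "n - k' = Suc (n - k)" and "a + 1 + real k' = a + real k" and "c + real k' = c + real k - 1"
    using assms by simp_all
  then show ?thesis by (simp add: hcoef_def Suc ac_simps)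
qed simp

text \<open>Coefficientwise form of the second relation; the term with index k - 1
  comes from the shift x^2 q_{k-1} = ... - 16 q_k.\<close>
lemma hcoef_three_term:
  "hcoef a c (Suc n) k =
     hcoef (a + 1) c n k * (16 * (e + real k)^2 - 16 * (e - a)^2)
     - 16 * (if k = 0 then 0 else hcoef (a + 1) c n (k - 1))
     + 16 * (a + real n) * (a + c + real n - 2 * e) * hcoef a c n k"
proof (cases "k \<le> n")
  case True
  define Pa where "Pa = pochhammer (a + 1 + real k) (n - k)"
  define Pc where "Pc = pochhammer (c + real k) (n - k)"
  define Sm where "Sm = (if k = 0 then 0 else sbinom n (k - 1))"
  have pa: "pochhammer (a + real k) (Suc (n - k)) = (a + real k) * Pa"
    by (simp add: Pa_def pochhammer_rec algebra_simps)
  have pc: "pochhammer (c + real k) (Suc (n - k)) = Pc * (c + real n)"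
    using True by (simp add: Pc_def pochhammer_Suc of_nat_diff)
  have pc': "pochhammer (c + real k - 1) (Suc (n - k)) = (c + real k - 1) * Pc"
    by (simp add: Pc_def pochhammer_rec algebra_simps)
  have lhs: "hcoef a c (Suc n) k = 16^n * 16 * sbinom (Suc n) k * (a + real k) * Pa * Pc * (c + real n)"
    using True by (simp add: hcoef_def Suc_diff_le pa pc)
  have odd_k: "hcoef (a + 1) c n k = 16^n * sbinom n k * Pa * Pc"
    by (simp add: hcoef_def Pa_def Pc_def)
  have even_k: "(a + real n) * hcoef a c n k = 16^n * sbinom n k * (a + real k) * Pa * Pc"
    using hcoef_shift[of a k c n] odd_k by (simp add: algebra_simps)
  have dist: "16 * (e + real k)^2 - 16 * (e - a)^2 = 16 * (a + real k) * (2 * e + real k - a)"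
    by (simp add: power2_eq_square algebra_simps)
  have even_term: "16 * (a + real n) * (a + c + real n - 2 * e) * hcoef a c n k
      = 16 * (a + c + real n - 2 * e) * (16^n * sbinom n k * (a + real k) * Pa * Pc)"
    unfolding even_k[symmetric] by (simp only: ac_simps)
  have rhs: "hcoef (a + 1) c n k * (16 * (e + real k)^2 - 16 * (e - a)^2)
     - 16 * (if k = 0 then 0 else hcoef (a + 1) c n (k - 1))
     + 16 * (a + real n) * (a + c + real n - 2 * e) * hcoef a c n k
     = 16^n * 16 * (a + real k) * Pa * Pc * (sbinom n k * (c + real k + real n) - Sm * (c + real k - 1))"
    unfolding odd_k hcoef_pred[OF True] pa pc' dist even_term Sm_def[symmetric]
    by (simp add: algebra_simps)
  have "sbinom (Suc n) k * (c + real n) = sbinom n k * (c + real k + real n) - Sm * (c + real k - 1)"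
    using sbinom_pred(2)[OF True] unfolding sbinom_pred(1)[OF True] Sm_def[symmetric]
    by (simp add: algebra_simps)
  then show ?thesis
    unfolding lhs rhs by (simp add: ac_simps)
next
  case False
  then consider "k = Suc n" | "Suc n < k" by linarith
  then show ?thesis
  proof cases
    case 1
    have "sbinom (Suc n) (Suc n) = - sbinom n n" by (simp add: sbinom_def)
    with 1 show ?thesis by (simp add: hcoef_def sbinom_eq_0)
  next
    case 2
    then show ?thesis by (simp add: hcoef_eq_0)
  qed
qed

section \<open>The cleared hypergeometric sums\<close>

definition qbasis :: "real \<Rightarrow> real \<Rightarrow> nat \<Rightarrow> real" where
  "qbasis e x k = pochhammer (e + x/4) k * pochhammer (e - x/4) k"

lemma qbasis_mult_sq: "x^2 * qbasis e x k = 16 * (e + real k)^2 * qbasis e x k - 16 * qbasis e x (Suc k)"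
  by (simp add: qbasis_def pochhammer_Suc algebra_simps power2_eq_square)

definition cleared_3F2 :: "real \<Rightarrow> real \<Rightarrow> real \<Rightarrow> real \<Rightarrow> nat \<Rightarrow> real" where
  "cleared_3F2 a c e x n = (\<Sum>k\<le>n. hcoef a c n k * qbasis e x k)"

lemma cleared_3F2_extend: "cleared_3F2 a c e x n = (\<Sum>k\<le>Suc n. hcoef a c n k * qbasis e x k)"
  by (simp add: cleared_3F2_def hcoef_eq_0)

lemma cleared_3F2_contiguous:
  "cleared_3F2 (a + 1) c e x (Suc n)
     = cleared_3F2 a c e x (Suc n) + 16 * (real n + 1) * (c + real n) * cleared_3F2 (a + 1) c e x n"
  unfolding cleared_3F2_def[of "a + 1" c e x "Suc n"] hcoef_contiguous
  by (simp add: cleared_3F2_def cleared_3F2_extend[of "a + 1"] hcoef_eq_0 sum.distrib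
      sum_distrib_left algebra_simps)

text \<open>The second relation: after multiplying by x^2 - 16(e-a)^2 and applying
  qbasis_mult_sq, the coefficients match hcoef_three_term after an index shift.\<close>
lemma cleared_3F2_three_term:
  "cleared_3F2 a c e x (Suc n)
     = (x^2 - 16 * (e - a)^2) * cleared_3F2 (a + 1) c e x n
       + 16 * (a + real n) * (a + c + real n - 2 * e) * cleared_3F2 a c e x n"
proof -
  define U where "U = 16 * (a + real n) * (a + c + real n - 2 * e)"
  define D where "D k = 16 * (e + real k)^2 - 16 * (e - a)^2" for k
  define odd_c where "odd_c k = hcoef (a + 1) c n k" for k
  define shifted where "shifted k = (if k = 0 then 0 else odd_c (k - 1))" for k
  have "cleared_3F2 a c e x (Suc n)
      = (\<Sum>k\<le>Suc n. odd_c k * D k * qbasis e x k - 16 * (shifted k * qbasis e x k)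
                     + U * (hcoef a c n k * qbasis e x k))"
    unfolding cleared_3F2_def
    by (rule sum.cong) (simp_all add: hcoef_three_term[of a c n _ e] D_def odd_c_def shifted_def U_def
        algebra_simps)
  also have "\<dots> = (\<Sum>k\<le>Suc n. odd_c k * D k * qbasis e x k)
      - 16 * (\<Sum>k\<le>Suc n. shifted k * qbasis e x k) + U * cleared_3F2 a c e x n"
    unfolding cleared_3F2_extend by (simp add: sum.distrib sum_subtractf sum_distrib_left distrib_left)
  also have "(\<Sum>k\<le>Suc n. odd_c k * D k * qbasis e x k)
      = (\<Sum>k\<le>n. odd_c k * D k * qbasis e x k)"
    by (simp add: odd_c_def hcoef_eq_0)
  also have "(\<Sum>k\<le>Suc n. shifted k * qbasis e x k)
      = (\<Sum>k\<le>n. odd_c k * qbasis e x (Suc k))"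
    by (subst sum.atMost_Suc_shift) (simp add: shifted_def)
  also have "(\<Sum>k\<le>n. odd_c k * D k * qbasis e x k) - 16 * (\<Sum>k\<le>n. odd_c k * qbasis e x (Suc k))
      = (\<Sum>k\<le>n. odd_c k * (x^2 * qbasis e x k - 16 * (e - a)^2 * qbasis e x k))"
    unfolding qbasis_mult_sq D_def
    by (simp add: sum_subtractf sum.distrib sum_distrib_left algebra_simps)
  also have "\<dots> = (x^2 - 16 * (e - a)^2) * cleared_3F2 (a + 1) c e x n"
    unfolding cleared_3F2_def odd_c_def sum_distrib_left by (simp add: algebra_simps)
  finally show ?thesis unfolding U_def .
qed

lemma cleared_3F2_eq_hyp3F2:
  assumes "pochhammer a n \<noteq> 0" and "pochhammer c n \<noteq> 0"
  shows "16^n * pochhammer a n * pochhammer c n * hyp3F2 n (e + x/4) (e - x/4) a c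
           = cleared_3F2 a c e x n"
  unfolding hyp3F2_def atLeast0AtMost cleared_3F2_def sum_distrib_left
proof (rule sum.cong[OF refl])
  fix k assume "k \<in> {..n}"
  then have kn: "k \<le> n" by simp
  have pa: "pochhammer a n = pochhammer a k * pochhammer (a + real k) (n - k)"
    using pochhammer_product[OF kn, of a] by simp
  have pc: "pochhammer c n = pochhammer c k * pochhammer (c + real k) (n - k)"
    using pochhammer_product[OF kn, of c] by simp
  have "pochhammer a k \<noteq> 0" "pochhammer c k \<noteq> 0"
    using assms pochhammer_neq_0_mono kn by blast+
  then show "16^n * pochhammer a n * pochhammer c n * (pochhammer (- real n) k
        * pochhammer (e + x/4) k * pochhammer (e - x/4) k / (pochhammer a k * pochhammer c k * fact k))
      = hcoef a c n k * qbasis e x k"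
    unfolding hcoef_def qbasis_def sbinom_pochhammer pa pc by (simp add: field_simps)
qed

section \<open>The dual -1 Hahn recurrence\<close>

lemma dual_hahn_0: "dual_hahn N \<alpha> \<beta> 0 = 1"
  by (simp add: dual_hahn_def)

lemma dual_hahn_1: "dual_hahn N \<alpha> \<beta> (Suc 0) = [:- dh_b N \<alpha> \<beta> 0, 1:]"
  by (simp add: dual_hahn_def)

lemma poly_dual_hahn_rec:
  "poly (dual_hahn N \<alpha> \<beta> (Suc (Suc m))) y
     = (y - dh_b N \<alpha> \<beta> (Suc m)) * poly (dual_hahn N \<alpha> \<beta> (Suc m)) y
       - dh_u N \<alpha> \<beta> (Suc m) * poly (dual_hahn N \<alpha> \<beta> m) y"
  by (simp add: dual_hahn_def split_beta algebra_simps)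

lemma dh_coeffs_in_parameters:
  fixes N :: nat and \<alpha> \<beta> :: real
  defines "a \<equiv> - real N / 2" and "c \<equiv> 1 - \<alpha> / 2" and "e \<equiv> 1/2 - (\<alpha> + \<beta>) / 4"
  shows "dh_b N \<alpha> \<beta> (Suc (2*n)) = - 1 - 4 * (e - a)"
    and "dh_u N \<alpha> \<beta> (Suc (2*n)) = - 16 * (a + real n) * (a + c + real n - 2 * e)"
    and "dh_b N \<alpha> \<beta> (Suc (Suc (2*n))) = 4 * (e - a) - 1"
    and "dh_u N \<alpha> \<beta> (Suc (Suc (2*n))) = - 16 * (real n + 1) * (c + real n)"
  by (simp_all add: dh_b_def dh_u_def a_def c_def e_def field_simps)

text \<open>The polynomials in cleared form, valid for every n: no nonvanishing
  hypothesis is needed before dividing out the Pochhammer prefactors.\<close>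
lemma dual_hahn_cleared:
  fixes N :: nat and \<alpha> \<beta> x :: real
  defines "a \<equiv> - real N / 2" and "c \<equiv> 1 - \<alpha> / 2" and "e \<equiv> 1/2 - (\<alpha> + \<beta>) / 4"
  shows "poly (dual_hahn N \<alpha> \<beta> (2*n)) (x - 1) = cleared_3F2 a c e x n
       \<and> poly (dual_hahn N \<alpha> \<beta> (2*n+1)) (x - 1)
           = (x - 4 * (e - a)) * cleared_3F2 (a + 1) c e x n"
proof (induction n)
  case 0
  show ?case
    by (simp add: dual_hahn_0 dual_hahn_1 cleared_3F2_def hcoef_def sbinom_def qbasis_def dh_b_def
        a_def e_def field_simps)
next
  case (Suc n)
  let ?P = "\<lambda>m. poly (dual_hahn N \<alpha> \<beta> m) (x - 1)"
  note coeffs = dh_coeffs_in_parameters[of N \<alpha> \<beta> n, folded a_def c_def e_def]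
  have even_IH: "?P (2*n) = cleared_3F2 a c e x n"
    and odd_IH: "?P (Suc (2*n)) = (x - 4 * (e - a)) * cleared_3F2 (a + 1) c e x n"
    using Suc.IH by simp_all
  have "?P (Suc (Suc (2*n))) = (x^2 - 16 * (e - a)^2) * cleared_3F2 (a + 1) c e x n
      + 16 * (a + real n) * (a + c + real n - 2 * e) * cleared_3F2 a c e x n"
    unfolding poly_dual_hahn_rec[of N \<alpha> \<beta> "2*n"] even_IH odd_IH coeffs
    by (simp add: power2_eq_square algebra_simps)
  then have even: "?P (Suc (Suc (2*n))) = cleared_3F2 a c e x (Suc n)"
    by (simp add: cleared_3F2_three_term)
  have "?P (Suc (Suc (Suc (2*n)))) = (x - 4 * (e - a))
      * (cleared_3F2 a c e x (Suc n) + 16 * (real n + 1) * (c + real n) * cleared_3F2 (a + 1) c e x n)"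
    unfolding poly_dual_hahn_rec[of N \<alpha> \<beta> "Suc (2*n)"] even odd_IH coeffs
    by (simp add: algebra_simps)
  then show ?case
    using even by (simp add: cleared_3F2_contiguous)
qed

theorem mainTheorem5:
  fixes N :: nat and \<alpha> \<beta> :: real
  assumes "N > 0" and "even N"
    and "\<And>k. k \<le> N div 2 \<Longrightarrow> pochhammer (1 - \<alpha> / 2) k \<noteq> 0"
  defines "\<eta> \<equiv> 1/2 - (\<alpha> + \<beta>) / 4" and "\<tau> \<equiv> 2 * real N + 2 - \<alpha> - \<beta>"
  shows "(\<forall>n \<le> N div 2. \<forall>x::real.
            poly (dual_hahn N \<alpha> \<beta> (2*n)) (x - 1) =
              16 ^ n * pochhammer (- real N / 2) n * pochhammer (1 - \<alpha> / 2) n *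
              hyp3F2 n (\<eta> + x / 4) (\<eta> - x / 4) (- real N / 2) (1 - \<alpha> / 2))
       \<and> (\<forall>n. n + 1 \<le> N div 2 \<longrightarrow> (\<forall>x::real.
            poly (dual_hahn N \<alpha> \<beta> (2*n+1)) (x - 1) =
              16 ^ n * pochhammer (1 - real N / 2) n * pochhammer (1 - \<alpha> / 2) n * (x - \<tau>) *
              hyp3F2 n (\<eta> + x / 4) (\<eta> - x / 4) (1 - real N / 2) (1 - \<alpha> / 2)))"
proof -
  obtain M where M: "N = 2 * M" using \<open>even N\<close> by blast
  have even_base: "- real N / 2 = - real M" and odd_base: "- real N / 2 + 1 = - real (M - 1)"
    and odd_base': "1 - real N / 2 = - real (M - 1)" and tau: "\<tau> = 4 * (\<eta> - - real N / 2)"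
    using \<open>N > 0\<close> by (simp_all add: M \<eta>_def \<tau>_def of_nat_diff field_simps)
  have c_ok: "pochhammer (1 - \<alpha> / 2) n \<noteq> 0" if "n \<le> M" for n
    using assms(3) that by (simp add: M)
  show ?thesis
  proof (intro conjI allI impI)
    fix n x assume "n \<le> N div 2"
    then have "pochhammer (- real M) n \<noteq> 0" "pochhammer (1 - \<alpha> / 2) n \<noteq> 0"
      using pochhammer_of_nat_eq_0_lemma'[of n M, where 'a=real] c_ok[of n]
      by (simp_all add: M)
    then show "poly (dual_hahn N \<alpha> \<beta> (2*n)) (x - 1) =
        16 ^ n * pochhammer (- real N / 2) n * pochhammer (1 - \<alpha> / 2) n *
        hyp3F2 n (\<eta> + x / 4) (\<eta> - x / 4) (- real N / 2) (1 - \<alpha> / 2)"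
      unfolding dual_hahn_cleared[THEN conjunct1] \<eta>_def[symmetric] even_base
      by (simp add: cleared_3F2_eq_hyp3F2)
  next
    fix n x assume "n + 1 \<le> N div 2"
    then have "pochhammer (- real (M - 1)) n \<noteq> 0" "pochhammer (1 - \<alpha> / 2) n \<noteq> 0"
      using pochhammer_of_nat_eq_0_lemma'[of n "M - 1", where 'a=real] c_ok[of n]
      by (simp_all add: M)
    then show "poly (dual_hahn N \<alpha> \<beta> (2*n+1)) (x - 1) =
        16 ^ n * pochhammer (1 - real N / 2) n * pochhammer (1 - \<alpha> / 2) n * (x - \<tau>) *
        hyp3F2 n (\<eta> + x / 4) (\<eta> - x / 4) (1 - real N / 2) (1 - \<alpha> / 2)"
      unfolding dual_hahn_cleared[THEN conjunct2] \<eta>_def[symmetric] tau[symmetric]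
        odd_base odd_base'
      by (simp add: cleared_3F2_eq_hyp3F2[symmetric] ac_simps)
  qed
qed

end
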